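(* Let $X$ be a contractible metric space of homological dimension $n$. Let $Y\subset X$, $\alpha\in H_n(X,Y)$ and $S=\operatorname{spt}(\alpha)\subset X\setminus Y$. Let $p\in S$ and $0<r<|p,Y|$. Then for every neighborhood $W$ of $\partial B_r(p)\cap S$ in $X\setminus\{p\}$, the homomorphism $i_*:H_{n-1}(W)\to H_{n-1}(X\setminus\{p\})$ induced by inclusion is non-trivial.
   Context: $H_*$ is singular homology with $\mathbb Z$ coefficients. The homological dimension of $X$ is the supremum of all $n$ such that $H_n(U,V)\ne 0$ for some open pair $V\subset U\subset X$. The support $\operatorname{spt}(\alpha)$ of $\alpha\in H_n(X,Y)$ is the set of points $x\in X\setminus Y$ such that the image of $\alpha$ under $H_n(X,Y)\to H_n(X,X\setminus\{x\})$ is non-trivial. $|p,Y|$ is the distance from $p$ to $Y$, and $\partial B_r(p)=\{x\in X: |p,x|=r\}$. *)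

theory Defs
  imports "HOL-Analysis.Analysis" "HOL-Homology.Homology" "HOL-Library.Extended_Nat" "HOL-Library.Extended_Real"
begin

definition homological_dimension :: "'a topology \<Rightarrow> enat" where
  "homological_dimension X =
     Sup {enat n | n. \<exists>U V. openin X U \<and> openin X V \<and> V \<subseteq> U \<and>
            \<not> trivial_group (relative_homology_group (int n) (subtopology X U) V)}"

definition hsupport :: "int \<Rightarrow> 'a topology \<Rightarrow> 'a set \<Rightarrow> ('a chain) set \<Rightarrow> 'a set" where
  "hsupport n X Y a =
     {x \<in> topspace X - Y.
        hom_induced n X Y X (topspace X - {x}) id a \<noteq> \<one>\<^bsub>relative_homology_group n X (topspace X - {x})\<^esub>}"

end

theory Submission
  imports Defs
begin

(* Let \<alpha>\<^sub>p be the image of \<alpha> in H_n(X, X - p); it is non-zero because p lies in the support,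
   and since X is contractible and n \<ge> 1 the boundary map H_n(X, X - p) \<rightarrow> H_{n-1}(X - p) is
   injective, so \<partial>\<alpha>\<^sub>p \<noteq> 0.  It remains to see that \<partial>\<alpha>\<^sub>p comes from W.
   Say that \<alpha> vanishes on A if its image in H_n(X, X - A) is zero.  Vanishing holds near every point
   off the support (a bounding chain has compact support), and for closed sets it is stable under
   finite unions by a Mayer-Vietoris argument, because H_{n+1}(X, V) = 0 for open V.  By compactness
   of a representing cycle, \<alpha> therefore vanishes on the closed set A = \<partial>B_r(p) - U, which misses the
   support and stays away from Y; so \<alpha> comes from H_n(X - A, Y).  Excising the outside of the
   closed ball from X - A shows that \<alpha>\<^sub>p comes from a class relative to U, whose boundary lies in
   H_{n-1}(U) and hence in the image of H_{n-1}(W). *)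

lemma hom_induced_excision_iso_Un:
  assumes P: "openin X P" and Q: "openin X Q"
  shows "hom_induced p (subtopology X P) (P \<inter> Q) (subtopology X (P \<union> Q)) Q id
           \<in> iso (relative_homology_group p (subtopology X P) (P \<inter> Q))
                 (relative_homology_group p (subtopology X (P \<union> Q)) Q)"
proof -
  let ?Z = "subtopology X (P \<union> Q)"
  have "closedin ?Z (Q - P)"
    unfolding closedin_subtopology using P openin_subset[OF Q]
    by (intro exI[of _ "topspace X - P"]) auto
  moreover have "openin ?Z Q"
    using P Q by (simp add: openin_open_subtopology openin_Un)
  ultimately have excise: "?Z closure_of (Q - P) \<subseteq> ?Z interior_of Q"
    by (simp add: closure_of_closedin interior_of_openin)
  have "P \<union> Q - (Q - P) = P" "Q - (Q - P) = P \<inter> Q" by auto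
  with homology_excision_axiom[OF excise, of "P \<union> Q" p] show ?thesis
    by (simp add: subtopology_subtopology Int_absorb1)
qed

(* Excision identifies H_p(P, P \<inter> Q) with H_p(P \<union> Q, Q); a lift of \<gamma> dies in H_p(X, Q), so by
   exactness it is a boundary from H_{p+1}(X, P \<union> Q) = 0. *)
lemma relative_homology_Int_class_eq_one:
  assumes P: "openin X P" and Q: "openin X Q"
    and triv: "trivial_group (relative_homology_group (p + 1) X (P \<union> Q))"
    and \<gamma>: "\<gamma> \<in> carrier (relative_homology_group p X (P \<inter> Q))"
    and \<gamma>P: "hom_induced p X (P \<inter> Q) X P id \<gamma> = \<one>\<^bsub>relative_homology_group p X P\<^esub>"
    and \<gamma>Q: "hom_induced p X (P \<inter> Q) X Q id \<gamma> = \<one>\<^bsub>relative_homology_group p X Q\<^esub>"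
  shows "\<gamma> = \<one>\<^bsub>relative_homology_group p X (P \<inter> Q)\<^esub>"
proof -
  have "\<gamma> \<in> kernel (relative_homology_group p X (P \<inter> Q)) (relative_homology_group p X P)
               (hom_induced p X (P \<inter> Q) X P id)"
    using \<gamma> \<gamma>P by (simp add: kernel_def)
  also have "\<dots> = hom_induced p (subtopology X P) (P \<inter> Q) X (P \<inter> Q) id
                    ` carrier (relative_homology_group p (subtopology X P) (P \<inter> Q))"
    using homology_exactness_triple_3[of "P \<inter> Q" P p X] by simp
  finally obtain \<delta> where \<delta>: "\<delta> \<in> carrier (relative_homology_group p (subtopology X P) (P \<inter> Q))"
    and \<gamma>_eq: "\<gamma> = hom_induced p (subtopology X P) (P \<inter> Q) X (P \<inter> Q) id \<delta>"
    by blast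
  let ?e = "hom_induced p (subtopology X P) (P \<inter> Q) (subtopology X (P \<union> Q)) Q id"
  have e_iso: "?e \<in> iso (relative_homology_group p (subtopology X P) (P \<inter> Q))
                        (relative_homology_group p (subtopology X (P \<union> Q)) Q)"
    using hom_induced_excision_iso_Un[OF P Q] .
  have "hom_induced p (subtopology X (P \<union> Q)) Q X Q id (?e \<delta>)
          = hom_induced p (subtopology X P) (P \<inter> Q) X Q id \<delta>"
    by (subst hom_induced_compose') (auto simp: continuous_map_in_subtopology)
  also have "\<dots> = hom_induced p X (P \<inter> Q) X Q id \<gamma>"
    unfolding \<gamma>_eq by (subst hom_induced_compose') auto
  finally have "?e \<delta> \<in> kernel (relative_homology_group p (subtopology X (P \<union> Q)) Q)
                    (relative_homology_group p X Q) (hom_induced p (subtopology X (P \<union> Q)) Q X Q id)"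
    using \<gamma>Q by (simp add: kernel_def hom_induced_carrier)
  also have "\<dots> = hom_relboundary (p + 1) X (P \<union> Q) Q
                    ` carrier (relative_homology_group (p + 1) X (P \<union> Q))"
    using homology_exactness_triple_2[of Q "P \<union> Q" "p + 1" X] by simp
  finally have "?e \<delta> = \<one>\<^bsub>relative_homology_group p (subtopology X (P \<union> Q)) Q\<^esub>"
    using triv group_homomorphism_hom_relboundary[of "p + 1" X "P \<union> Q" Q]
    by (simp add: trivial_group_def hom_one subtopology_subtopology id_def)
  then have "\<delta> = \<one>\<^bsub>relative_homology_group p (subtopology X P) (P \<inter> Q)\<^esub>"
    using e_iso \<delta> by (simp add: iso_kernel_image kernel_def set_eq_iff) metis
  then show ?thesis
    unfolding \<gamma>_eq by (metis hom_one hom_induced_hom group_relative_homology_group)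
qed

lemma singular_chain_compact_support:
  assumes "singular_chain p X c"
  obtains K where "compactin X K" "singular_chain p (subtopology X K) c"
proof
  let ?K = "\<Union>f\<in>Poly_Mapping.keys c. f ` standard_simplex p"
  show "compactin X ?K"
  proof (rule compactin_Union)
    fix S assume "S \<in> (\<lambda>f. f ` standard_simplex p) ` Poly_Mapping.keys c"
    then obtain f where f: "f \<in> Poly_Mapping.keys c" and S: "S = f ` standard_simplex p" by auto
    have "continuous_map (subtopology (powertop_real UNIV) (standard_simplex p)) X f"
      using assms f by (auto simp: singular_chain_def singular_simplex_def)
    then show "compactin X S"
      unfolding S by (rule image_compactin[rotated]) (simp add: compactin_subtopology compactin_standard_simplex)
  qed simp
  show "singular_chain p (subtopology X ?K) c"
    using assms by (auto simp: singular_chain_subtopology)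
qed

lemma trivial_relative_homology_group_above_dimension:
  assumes "homological_dimension X \<le> enat n" "n < k" "openin X U" "openin X V" "V \<subseteq> U"
  shows "trivial_group (relative_homology_group (int k) (subtopology X U) V)"
proof (rule ccontr)
  assume "\<not> ?thesis"
  then have "enat k \<le> homological_dimension X"
    unfolding homological_dimension_def using assms(3-5) by (intro Sup_upper) blast
  with assms(1,2) show False
    by (metis enat_ord_simps(1) leD order_trans)
qed

definition hom_vanishes_on :: "int \<Rightarrow> 'a topology \<Rightarrow> 'a set \<Rightarrow> 'a chain set \<Rightarrow> 'a set \<Rightarrow> bool" where
  "hom_vanishes_on p X Y a A \<longleftrightarrow>
     hom_induced p X Y X (topspace X - A) id a = \<one>\<^bsub>relative_homology_group p X (topspace X - A)\<^esub>"

lemma in_hsupport_iff: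
  "x \<in> hsupport p X Y a \<longleftrightarrow> x \<in> topspace X - Y \<and> \<not> hom_vanishes_on p X Y a {x}"
  by (simp add: hsupport_def hom_vanishes_on_def)

lemma hom_vanishes_on_empty [simp]: "hom_vanishes_on p X Y a {}"
  using hom_induced_carrier[of p X Y X "topspace X" id a]
    trivial_relative_homology_group_topspace[of p X]
  by (simp add: hom_vanishes_on_def trivial_group_def)

lemma hom_vanishes_on_subset:
  assumes "hom_vanishes_on p X Y a B" "A \<subseteq> B" "Y \<subseteq> topspace X - B"
  shows "hom_vanishes_on p X Y a A"
proof -
  have "hom_induced p X Y X (topspace X - A) id a
          = hom_induced p X (topspace X - B) X (topspace X - A) id (hom_induced p X Y X (topspace X - B) id a)"
    using assms(2,3) by (subst hom_induced_compose') auto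
  then show ?thesis
    using assms(1) by (simp add: hom_vanishes_on_def hom_one[OF hom_induced_hom])
qed

lemma hom_vanishes_on_iff_relboundary:
  assumes "singular_relcycle n X Y c" "Y \<subseteq> topspace X - A"
  shows "hom_vanishes_on (int n) X Y (homologous_rel_set n X Y c) A
           \<longleftrightarrow> singular_relboundary n X (topspace X - A) c"
proof -
  have "hom_induced (int n) X Y X (topspace X - A) id (homologous_rel_set n X Y c)
          = homologous_rel_set n X (topspace X - A) c"
    using assms by (subst hom_induced_chain_map) (auto simp: chain_map_ident singular_relcycle_def)
  then show ?thesis
    by (simp add: hom_vanishes_on_def homologous_rel_set_eq_relboundary)
qed

lemma hom_vanishes_on_Un:
  assumes dim: "homological_dimension X \<le> enat n"
    and A: "closedin X A" and B: "closedin X B" and Y: "Y \<subseteq> topspace X - (A \<union> B)"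
    and "hom_vanishes_on (int n) X Y \<alpha> A" "hom_vanishes_on (int n) X Y \<alpha> B"
  shows "hom_vanishes_on (int n) X Y \<alpha> (A \<union> B)"
proof -
  define P where "P = topspace X - A"
  define Q where "Q = topspace X - B"
  have PQ: "P \<inter> Q = topspace X - (A \<union> B)" "P \<union> Q = topspace X - (A \<inter> B)"
    by (auto simp: P_def Q_def)
  have open_PQ: "openin X P" "openin X Q" "openin X (P \<union> Q)"
    using A B by (auto simp: P_def Q_def PQ)
  let ?\<gamma> = "hom_induced (int n) X Y X (P \<inter> Q) id \<alpha>"
  have "trivial_group (relative_homology_group (int n + 1) X (P \<union> Q))"
    using trivial_relative_homology_group_above_dimension
            [OF dim lessI openin_topspace open_PQ(3) openin_subset[OF open_PQ(3)]]
    by (simp add: add.commute)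
  moreover have "hom_induced (int n) X (P \<inter> Q) X P id ?\<gamma> = hom_induced (int n) X Y X P id \<alpha>"
    "hom_induced (int n) X (P \<inter> Q) X Q id ?\<gamma> = hom_induced (int n) X Y X Q id \<alpha>"
    using Y unfolding PQ by (subst hom_induced_compose'; auto simp: P_def Q_def)+
  ultimately have "?\<gamma> = \<one>\<^bsub>relative_homology_group (int n) X (P \<inter> Q)\<^esub>"
    using assms(5,6) open_PQ
    by (intro relative_homology_Int_class_eq_one) (auto simp: hom_vanishes_on_def P_def Q_def hom_induced_carrier)
  then show ?thesis
    by (simp add: hom_vanishes_on_def PQ)
qed

lemma hom_vanishes_on_Union:
  assumes dim: "homological_dimension X \<le> enat n" and "finite \<A>"
    and "\<And>A. A \<in> \<A> \<Longrightarrow> closedin X A \<and> hom_vanishes_on (int n) X Y \<alpha> A"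
    and "Y \<subseteq> topspace X - \<Union>\<A>"
  shows "hom_vanishes_on (int n) X Y \<alpha> (\<Union>\<A>)"
  using assms(2-)
proof (induction \<A> rule: finite_induct)
  case (insert A \<A>)
  then have "closedin X (\<Union>\<A>)"
    by (auto intro: closedin_Union)
  with insert show ?case
    by (auto intro!: hom_vanishes_on_Un[OF dim])
qed simp

(* A chain bounding the representing cycle in X - A has compact support K; N = X - K works. *)
lemma hom_vanishes_on_neighbourhood:
  assumes "Hausdorff_space X" and \<alpha>: "\<alpha> \<in> carrier (relative_homology_group (int n) X Y)"
    and A: "A \<subseteq> topspace X" "Y \<subseteq> topspace X - A" "hom_vanishes_on (int n) X Y \<alpha> A"
  obtains N where "openin X N" "A \<subseteq> N"
    "\<And>B. \<lbrakk>B \<subseteq> N; disjnt B Y\<rbrakk> \<Longrightarrow> hom_vanishes_on (int n) X Y \<alpha> B"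
proof -
  obtain c where c: "singular_relcycle n X Y c" and \<alpha>_eq: "\<alpha> = homologous_rel_set n X Y c"
    using \<alpha> by (auto simp: carrier_relative_homology_group)
  then have "singular_relboundary n X (topspace X - A) c"
    using hom_vanishes_on_iff_relboundary[OF c A(2)] A(3) by simp
  then obtain b e where b: "singular_chain (Suc n) X b"
    and e: "singular_chain n (subtopology X (topspace X - A)) e"
    and c_eq: "chain_boundary (Suc n) b + e = c"
    unfolding singular_relboundary by blast
  obtain K where "compactin (subtopology X (topspace X - A)) K"
    and eK: "singular_chain n (subtopology (subtopology X (topspace X - A)) K) e"
    using singular_chain_compact_support[OF e] .
  then have K: "compactin X K" "K \<subseteq> topspace X - A"
    by (auto simp: compactin_subtopology)
  with eK have eK': "singular_chain n (subtopology X K) e"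
    by (simp add: subtopology_subtopology Int_absorb1)
  show thesis
  proof
    show "openin X (topspace X - K)"
      using compactin_imp_closedin[OF assms(1) K(1)] by (simp add: closedin_def)
    show "A \<subseteq> topspace X - K"
      using A(1) K(2) by auto
  next
    fix B assume B: "B \<subseteq> topspace X - K" "disjnt B Y"
    then have "K \<subseteq> topspace X - B"
      using compactin_subset_topspace[OF K(1)] by auto
    then have "singular_chain n (subtopology X (topspace X - B)) e"
      by (rule singular_chain_mono[OF eK'])
    then have "singular_relboundary n X (topspace X - B) c"
      using b c_eq unfolding singular_relboundary by blast
    moreover have "Y \<subseteq> topspace X - B"
      using A(2) B(2) by (auto simp: disjnt_def)
    ultimately show "hom_vanishes_on (int n) X Y \<alpha> B"
      using hom_vanishes_on_iff_relboundary[OF c] by (simp add: \<alpha>_eq)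
  qed
qed

lemma hom_vanishes_on_closed_neighbourhood:
  assumes X: "Hausdorff_space X" "regular_space X"
    and Y: "Y \<subseteq> topspace X" and \<alpha>: "\<alpha> \<in> carrier (relative_homology_group (int n) X Y)"
    and x: "x \<in> topspace X" "x \<notin> X closure_of Y" "x \<notin> hsupport (int n) X Y \<alpha>"
  shows "\<exists>U V. openin X U \<and> closedin X V \<and> x \<in> U \<and> U \<subseteq> V \<and> disjnt V Y
               \<and> hom_vanishes_on (int n) X Y \<alpha> V"
proof -
  have "x \<notin> Y"
    using x(2) closure_of_subset[OF Y] by blast
  with x have "hom_vanishes_on (int n) X Y \<alpha> {x}"
    by (simp add: in_hsupport_iff)
  then obtain N where N: "openin X N" "x \<in> N"
    and vanishes_N: "\<And>B. \<lbrakk>B \<subseteq> N; disjnt B Y\<rbrakk> \<Longrightarrow> hom_vanishes_on (int n) X Y \<alpha> B"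
    using hom_vanishes_on_neighbourhood[OF X(1) \<alpha>, of "{x}"] x(1) \<open>x \<notin> Y\<close> Y by auto
  have "openin X (N - X closure_of Y)" "x \<in> N - X closure_of Y"
    using N x by (simp_all add: openin_diff)
  then obtain U V where UV: "openin X U" "closedin X V" "x \<in> U" "U \<subseteq> V" "V \<subseteq> N - X closure_of Y"
    using X(2) unfolding neighbourhood_base_of_closedin[symmetric] neighbourhood_base_of by meson
  have disjnt_V: "disjnt V Y"
    using UV(5) closure_of_subset[OF Y] by (auto simp: disjnt_def)
  have "hom_vanishes_on (int n) X Y \<alpha> V"
    using UV(5) disjnt_V by (intro vanishes_N) auto
  with UV disjnt_V show ?thesis
    by blast
qed

lemma hom_vanishes_on_closedin_disjoint_hsupport:
  assumes X: "Hausdorff_space X" "regular_space X" and dim: "homological_dimension X \<le> enat n"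
    and Y: "Y \<subseteq> topspace X" and \<alpha>: "\<alpha> \<in> carrier (relative_homology_group (int n) X Y)"
    and A: "closedin X A" "disjnt A (X closure_of Y)" "disjnt A (hsupport (int n) X Y \<alpha>)"
  shows "hom_vanishes_on (int n) X Y \<alpha> A"
proof -
  have AY: "disjnt A Y"
    using A(2) closure_of_subset[OF Y] by (auto simp: disjnt_def)
  obtain c where c: "singular_relcycle n X Y c" and \<alpha>_eq: "\<alpha> = homologous_rel_set n X Y c"
    using \<alpha> by (auto simp: carrier_relative_homology_group)
  obtain K where K: "compactin X K" "singular_chain n (subtopology X K) c"
    using singular_chain_compact_support c unfolding singular_relcycle_def by metis
  have "\<exists>U V. openin X U \<and> closedin X V \<and> x \<in> U \<and> U \<subseteq> V \<and> disjnt V Y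
               \<and> hom_vanishes_on (int n) X Y \<alpha> V" if "x \<in> A" for x
    using that A closedin_subset[OF A(1)]
    by (intro hom_vanishes_on_closed_neighbourhood[OF X Y \<alpha>]) (auto simp: disjnt_iff)
  then obtain U V where UV: "\<And>x. x \<in> A \<Longrightarrow> openin X (U x) \<and> closedin X (V x) \<and> x \<in> U x
      \<and> U x \<subseteq> V x \<and> disjnt (V x) Y \<and> hom_vanishes_on (int n) X Y \<alpha> (V x)"
    by metis
  have "compactin X (A \<inter> K)"
    using closed_Int_compactin[OF A(1) K(1)] .
  moreover have "\<forall>W \<in> U ` (A \<inter> K). openin X W" "A \<inter> K \<subseteq> \<Union>(U ` (A \<inter> K))"
    using UV by blast+
  ultimately obtain \<V> where "finite \<V>" "\<V> \<subseteq> U ` (A \<inter> K)" "A \<inter> K \<subseteq> \<Union>\<V>"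
    unfolding compactin_def by meson
  then obtain F where F: "finite F" "F \<subseteq> A \<inter> K" "A \<inter> K \<subseteq> \<Union>(U ` F)"
    by (metis finite_subset_image)
  \<comment> \<open>The part of A not covered by the finitely many neighbourhoods misses K, which carries c.\<close>
  define A' where "A' = A - \<Union>(U ` F)"
  have Y_A': "Y \<subseteq> topspace X - A'"
    using Y AY by (auto simp: A'_def disjnt_def)
  have "K \<subseteq> topspace X - A'"
    using F(3) compactin_subset_topspace[OF K(1)] by (auto simp: A'_def)
  then have "singular_relboundary n X (topspace X - A') c"
    by (intro singular_chain_imp_relboundary singular_chain_mono[OF K(2)])
  then have "hom_vanishes_on (int n) X Y \<alpha> A'"
    using hom_vanishes_on_iff_relboundary[OF c Y_A'] by (simp add: \<alpha>_eq)
  moreover have "closedin X A'"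
    using A(1) UV F(2) unfolding A'_def by (intro closedin_diff openin_Union) auto
  moreover have Y_cover: "Y \<subseteq> topspace X - \<Union>(insert A' (V ` F))"
    using Y_A' UV F(2) by (auto simp: disjnt_def)
  ultimately have "hom_vanishes_on (int n) X Y \<alpha> (\<Union>(insert A' (V ` F)))"
    using UV F by (intro hom_vanishes_on_Union[OF dim]) auto
  moreover have "A \<subseteq> \<Union>(insert A' (V ` F))"
    using UV F(2) by (auto simp: A'_def)
  ultimately show ?thesis
    using hom_vanishes_on_subset Y_cover by blast
qed

lemma hom_boundary_eq_one_iff_contractible:
  assumes "contractible_space X" "p \<noteq> 0" "\<beta> \<in> carrier (relative_homology_group p X S)"
  shows "hom_boundary p X S \<beta> = \<one>\<^bsub>homology_group (p - 1) (subtopology X S)\<^esub>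
           \<longleftrightarrow> \<beta> = \<one>\<^bsub>relative_homology_group p X S\<^esub>"
proof
  assume "hom_boundary p X S \<beta> = \<one>\<^bsub>homology_group (p - 1) (subtopology X S)\<^esub>"
  then have "\<beta> \<in> kernel (relative_homology_group p X S) (homology_group (p - 1) (subtopology X S))
                  (hom_boundary p X S)"
    using assms(3) by (simp add: kernel_def)
  also have "\<dots> = hom_induced p X {} X S id ` carrier (homology_group p X)"
    using homology_exactness_axiom_1[of p X S] by simp
  also have "\<dots> = {\<one>\<^bsub>relative_homology_group p X S\<^esub>}"
    using trivial_reduced_homology_group_contractible_space[OF assms(1), of p]
    by (simp add: un_reduced_homology_group[OF assms(2)] trivial_group_def hom_one[OF hom_induced_hom])
  finally show "\<beta> = \<one>\<^bsub>relative_homology_group p X S\<^esub>"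
    by simp
qed (simp add: hom_one[OF hom_boundary_hom])

lemma hom_induced_excision_iso_closedin:
  assumes "closedin Z C" "openin Z D" "D \<subseteq> C" "openin Z U" "C - D \<subseteq> U"
  shows "hom_induced p (subtopology Z C) (C \<inter> U) Z ((topspace Z - C) \<union> U) id
           \<in> iso (relative_homology_group p (subtopology Z C) (C \<inter> U))
                 (relative_homology_group p Z ((topspace Z - C) \<union> U))"
proof -
  let ?E = "(topspace Z - C) \<union> U"
  have "Z closure_of (topspace Z - C) \<subseteq> topspace Z - D"
    using assms(2,3) by (intro closure_of_minimal) auto
  also have "\<dots> \<subseteq> Z interior_of ?E"
    using assms by (simp add: interior_of_openin openin_Un openin_diff) blast
  finally have excise: "Z closure_of (topspace Z - C) \<subseteq> Z interior_of ?E" .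
  have "topspace Z - (topspace Z - C) = C" "?E - (topspace Z - C) = C \<inter> U"
    using closedin_subset[OF assms(1)] openin_subset[OF assms(4)] by auto
  with homology_excision_axiom[OF excise, of "topspace Z" p] openin_subset[OF assms(4)]
  show ?thesis
    by simp
qed

lemma hom_vanishes_on_lift:
  assumes "\<alpha> \<in> carrier (relative_homology_group p X Y)" "hom_vanishes_on p X Y \<alpha> A"
    "Y \<subseteq> topspace X - A"
  obtains \<alpha>' where "\<alpha>' \<in> carrier (relative_homology_group p (subtopology X (topspace X - A)) Y)"
    "\<alpha> = hom_induced p (subtopology X (topspace X - A)) Y X Y id \<alpha>'"
proof -
  have "\<alpha> \<in> kernel (relative_homology_group p X Y) (relative_homology_group p X (topspace X - A))
                   (hom_induced p X Y X (topspace X - A) id)"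
    using assms(1,2) by (simp add: kernel_def hom_vanishes_on_def)
  also have "\<dots> = hom_induced p (subtopology X (topspace X - A)) Y X Y id
                    ` carrier (relative_homology_group p (subtopology X (topspace X - A)) Y)"
    using homology_exactness_triple_3[OF assms(3), of p X] by simp
  finally show thesis
    using that by blast
qed

lemma hom_boundary_hom_induced_in_image:
  assumes "V \<subseteq> L" "V \<subseteq> W" "W \<subseteq> S"
  shows "hom_boundary p X S (hom_induced p (subtopology X L) V X S id \<zeta>)
           \<in> hom_induced (p - 1) (subtopology X W) {} (subtopology X S) {} id
               ` carrier (homology_group (p - 1) (subtopology X W))"
proof -
  have "hom_boundary p X S \<circ> hom_induced p (subtopology X L) V X S id
          = hom_induced (p - 1) (subtopology (subtopology X L) V) {} (subtopology X S) {} id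
              \<circ> hom_boundary p (subtopology X L) V"
    using assms by (intro naturality_hom_induced) auto
  from fun_cong[OF this, of \<zeta>]
  have "hom_boundary p X S (hom_induced p (subtopology X L) V X S id \<zeta>)
          = hom_induced (p - 1) (subtopology X V) {} (subtopology X S) {} id
              (hom_boundary p (subtopology X L) V \<zeta>)"
    using assms(1) by (simp add: subtopology_subtopology Int_absorb1)
  also have "\<dots> = hom_induced (p - 1) (subtopology X W) {} (subtopology X S) {} id
          (hom_induced (p - 1) (subtopology X V) {} (subtopology X W) {} id
            (hom_boundary p (subtopology X L) V \<zeta>))"
    using assms by (subst hom_induced_compose') (auto simp: continuous_map_in_subtopology)
  finally show ?thesis
    using hom_induced_carrier by blast
qed

(* Lift \<alpha> to G = X - A, then excise G - C from (G, (G - C) \<union> (G \<inter> U)): the class of \<alpha> in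
   H_p(X, X - x) comes from H_p(G \<inter> C, G \<inter> C \<inter> U), whose boundary lies in H_{p-1}(G \<inter> C \<inter> U). *)
lemma hom_boundary_local_class_in_image:
  assumes \<alpha>: "\<alpha> \<in> carrier (relative_homology_group p X Y)"
    and A: "closedin X A" "hom_vanishes_on p X Y \<alpha> A"
    and CD: "closedin X C" "openin X D" "D \<subseteq> C" "x \<in> D"
    and Y: "Y \<subseteq> topspace X - (A \<union> C)"
    and U: "openin X U" "C - D - A \<subseteq> U" "U \<subseteq> W" "W \<subseteq> topspace X - {x}"
  shows "hom_boundary p X (topspace X - {x}) (hom_induced p X Y X (topspace X - {x}) id \<alpha>)
           \<in> hom_induced (p - 1) (subtopology X W) {} (subtopology X (topspace X - {x})) {} id
               ` carrier (homology_group (p - 1) (subtopology X W))"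
proof -
  define G where "G = topspace X - A"
  define L where "L = G \<inter> C"
  define V where "V = L \<inter> (G \<inter> U)"
  define E where "E = (G - L) \<union> (G \<inter> U)"
  let ?Z = "subtopology X G"
  let ?X' = "topspace X - {x}"
  obtain \<alpha>\<^sub>G where \<alpha>\<^sub>G: "\<alpha>\<^sub>G \<in> carrier (relative_homology_group p ?Z Y)"
    and \<alpha>_eq: "\<alpha> = hom_induced p ?Z Y X Y id \<alpha>\<^sub>G"
    using hom_vanishes_on_lift[OF \<alpha> A(2)] Y unfolding G_def by blast
  have "closedin ?Z L" "openin ?Z (G \<inter> D)" "openin ?Z (G \<inter> U)"
    using CD U by (simp_all add: L_def closedin_subtopology_Int_closed openin_subtopology_Int2)
  moreover have "G \<inter> D \<subseteq> L" "L - G \<inter> D \<subseteq> G \<inter> U"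
    using CD(3) U(2) by (auto simp: L_def G_def)
  moreover have "topspace X \<inter> G = G" "subtopology ?Z L = subtopology X L"
    by (auto simp: G_def subtopology_subtopology L_def)
  ultimately have "hom_induced p (subtopology X L) V ?Z E id
          \<in> iso (relative_homology_group p (subtopology X L) V) (relative_homology_group p ?Z E)"
    using hom_induced_excision_iso_closedin[of ?Z L "G \<inter> D" "G \<inter> U" p]
    by (simp add: V_def E_def)
  then have "hom_induced p ?Z Y ?Z E id \<alpha>\<^sub>G
               \<in> hom_induced p (subtopology X L) V ?Z E id ` carrier (relative_homology_group p (subtopology X L) V)"
    by (simp add: iso_def bij_betw_def hom_induced_carrier)
  then obtain \<zeta> where \<zeta>_eq: "hom_induced p (subtopology X L) V ?Z E id \<zeta> = hom_induced p ?Z Y ?Z E id \<alpha>\<^sub>G"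
    by auto
  have E: "Y \<subseteq> E" "E \<subseteq> ?X'" "V \<subseteq> E" "V \<subseteq> L" "V \<subseteq> W" "L \<subseteq> G"
    using Y U CD(3,4) by (auto simp: E_def L_def V_def G_def)
  have "hom_induced p X Y X ?X' id \<alpha> = hom_induced p ?Z Y X ?X' id \<alpha>\<^sub>G"
    unfolding \<alpha>_eq using E by (subst hom_induced_compose') auto
  also have "\<dots> = hom_induced p ?Z E X ?X' id (hom_induced p ?Z Y ?Z E id \<alpha>\<^sub>G)"
    using E by (subst hom_induced_compose') auto
  also have "\<dots> = hom_induced p (subtopology X L) V X ?X' id \<zeta>"
    unfolding \<zeta>_eq[symmetric] using E
    by (subst hom_induced_compose') (auto simp: continuous_map_in_subtopology)
  finally show ?thesis
    using hom_boundary_hom_induced_in_image[of V L W ?X' p X \<zeta>] E U(4) by simp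
qed

lemma (in Metric_space) mcball_disjnt_closure_of:
  assumes "ereal r < (INF y\<in>Y. ereal (d p y))"
  shows "disjnt (mcball p r) (mtopology closure_of Y)"
proof -
  obtain z where z: "ereal r < z" "z < (INF y\<in>Y. ereal (d p y))"
    using dense[OF assms] by blast
  then obtain r' where "z = ereal r'"
    by (cases z) auto
  with z have r': "r < r'" "\<And>y. y \<in> Y \<Longrightarrow> r' < d p y"
    using order.strict_trans2[OF z(2) INF_lower[of _ Y "\<lambda>y. ereal (d p y)"]] by auto
  have "x \<notin> mtopology closure_of Y" if "x \<in> mcball p r" for x
  proof
    assume "x \<in> mtopology closure_of Y"
    then have "\<exists>y\<in>Y. y \<in> mball x (r' - r)"
      using r'(1) by (simp add: metric_closure_of)
    then obtain y where "y \<in> Y" "y \<in> mball x (r' - r)" ..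
    then show False
      using that r'(2)[of y] triangle[of p x y] by auto
  qed
  then show ?thesis
    by (auto simp: disjnt_def)
qed

theorem corollary4p3:
  fixes M :: "'a set" and d :: "'a \<Rightarrow> 'a \<Rightarrow> real" and n :: nat
    and Y :: "'a set" and \<alpha> :: "('a chain) set" and p :: 'a and r :: real and W :: "'a set"
  assumes "Metric_space M d"
    and "contractible_space (Metric_space.mtopology M d)"
    and "homological_dimension (Metric_space.mtopology M d) = enat n"
    and "n \<ge> 1"
    and "Y \<subseteq> M"
    and "\<alpha> \<in> carrier (relative_homology_group (int n) (Metric_space.mtopology M d) Y)"
    and "p \<in> hsupport (int n) (Metric_space.mtopology M d) Y \<alpha>"
    and "0 < r"
    and "ereal r < (INF y\<in>Y. ereal (d p y))"
    and "W \<subseteq> M - {p}"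
    and "\<exists>U. openin (subtopology (Metric_space.mtopology M d) (M - {p})) U
              \<and> {x \<in> M. d p x = r} \<inter> hsupport (int n) (Metric_space.mtopology M d) Y \<alpha> \<subseteq> U
              \<and> U \<subseteq> W"
  shows "\<exists>a \<in> carrier (homology_group (int n - 1) (subtopology (Metric_space.mtopology M d) W)).
           hom_induced (int n - 1) (subtopology (Metric_space.mtopology M d) W) {}
                (subtopology (Metric_space.mtopology M d) (M - {p})) {} id a
             \<noteq> \<one>\<^bsub>homology_group (int n - 1) (subtopology (Metric_space.mtopology M d) (M - {p}))\<^esub>"
proof -
  interpret Metric_space M d by fact
  let ?\<beta> = "hom_boundary (int n) mtopology (M - {p})
                (hom_induced (int n) mtopology Y mtopology (M - {p}) id \<alpha>)"
  obtain U where U: "openin (subtopology mtopology (M - {p})) U"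
      "{x \<in> M. d p x = r} \<inter> hsupport (int n) mtopology Y \<alpha> \<subseteq> U" "U \<subseteq> W"
    using assms(11) by blast
  have p: "p \<in> M" "\<not> hom_vanishes_on (int n) mtopology Y \<alpha> {p}"
    using assms(7) by (auto simp: in_hsupport_iff)
  then have U_open: "openin mtopology U"
    using openin_trans_full[OF U(1)] closedin_Hausdorff_singleton[OF Hausdorff_space_mtopology]
    by (metis openin_diff openin_topspace topspace_mtopology)
  define A where "A = mcball p r - mball p r - U"
  have A_closed: "closedin mtopology A"
    unfolding A_def using U_open by (intro closedin_diff) auto
  have closure_Y: "disjnt (mcball p r) (mtopology closure_of Y)"
    using assms(9) by (rule mcball_disjnt_closure_of)
  then have "Y \<subseteq> M - (A \<union> mcball p r)"
    using assms(5) closure_of_subset[of Y mtopology] by (auto simp: A_def disjnt_def)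
  moreover have "hom_vanishes_on (int n) mtopology Y \<alpha> A"
    using assms(3,5,6) U(2) p(1) A_closed closure_Y Hausdorff_space_mtopology regular_space_mtopology
    by (intro hom_vanishes_on_closedin_disjoint_hsupport) (auto simp: A_def disjnt_iff)
  moreover have "mcball p r - mball p r - A \<subseteq> U"
    by (auto simp: A_def)
  ultimately have "?\<beta> \<in> hom_induced (int n - 1) (subtopology mtopology W) {} (subtopology mtopology (M - {p})) {} id
                      ` carrier (homology_group (int n - 1) (subtopology mtopology W))"
    using hom_boundary_local_class_in_image[of \<alpha> "int n" mtopology Y A "mcball p r" "mball p r" p U W]
      assms(6,8,10) A_closed mball_subset_mcball U_open U(3) p(1)
    by simp
  moreover have "?\<beta> \<noteq> \<one>\<^bsub>homology_group (int n - 1) (subtopology mtopology (M - {p}))\<^esub>"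
    using p(2) assms(4) hom_boundary_eq_one_iff_contractible[OF assms(2)]
    by (simp add: hom_vanishes_on_def hom_induced_carrier)
  ultimately show ?thesis
    by auto
qed

end
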